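(* Let $V(x)=x^2/2$, $\varepsilon\ge0$ and $\mathbf r\in\mathbb R^4$. The laws of the rescaled profiles $h_N$ under $\gamma^{\mathbf r}_{N,\varepsilon}$ are exponentially tight in $C([0,1];\mathbb R)$ at speed $N$: for every $M<\infty$ there is a compact $K_M\subset C([0,1];\mathbb R)$ with $\limsup_{N\to\infty}\frac1N\log\gamma^{\mathbf r}_{N,\varepsilon}(h_N\notin K_M)\le-M$.
   Context: $\mathcal H_{[-1,N+1]}(\phi)=\sum_{k=0}^{N}\frac12(\phi_{k+1}+\phi_{k-1}-2\phi_k)^2$. For $\mathbf r=(a,\alpha,b,\beta)$: $\psi^{(N)}(-1)=aN^2-\alpha N$, $\psi^{(N)}(0)=aN^2$, $\psi^{(N)}(N)=bN^2$, $\psi^{(N)}(N+1)=bN^2+\beta N$. $\gamma^{\mathbf r}_{N,\varepsilon}$ is the probability measure on $\phi:\{-1,\dots,N+1\}\to\mathbb R$ proportional to $e^{-\mathcal H_{[-1,N+1]}(\phi)}\prod_{k=1}^{N-1}(\varepsilon\delta_0(d\phi_k)+d\phi_k)\prod_{k\in\{-1,0,N,N+1\}}\delta_{\psi^{(N)}(k)}(d\phi_k)$. $h_N$ is the linear interpolation on $[0,1]$ of $h_N(k/N)=\phi_k/N^2$. *)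

theory Defs
  imports "HOL-Probability.Probability"
begin

definition config :: "nat \<Rightarrow> real \<times> real \<times> real \<times> real \<Rightarrow> (int \<Rightarrow> real) \<Rightarrow> int \<Rightarrow> real" where
  "config N r x k =
     (case r of (a, \<alpha>, b, \<beta>) \<Rightarrow>
       (if k = -1 then a * real N ^ 2 - \<alpha> * real N
        else if k = 0 then a * real N ^ 2
        else if k = int N then b * real N ^ 2
        else if k = int N + 1 then b * real N ^ 2 + \<beta> * real N
        else x k))"

definition hamiltonian :: "nat \<Rightarrow> (int \<Rightarrow> real) \<Rightarrow> real" where
  "hamiltonian N \<phi> = (\<Sum>k\<in>{0..int N}. (\<phi> (k+1) + \<phi> (k-1) - 2 * \<phi> k)^2 / 2)"

definition ref_measure :: "real \<Rightarrow> real measure" where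
  "ref_measure \<epsilon> = measure_of UNIV (sets borel)
     (\<lambda>A. ennreal \<epsilon> * indicator A 0 + emeasure lborel A)"

definition interior_measure :: "nat \<Rightarrow> real \<Rightarrow> (int \<Rightarrow> real) measure" where
  "interior_measure N \<epsilon> = PiM {1..int N - 1} (\<lambda>_. ref_measure \<epsilon>)"

text \<open>The probability measure gamma^r_{N,eps}, viewed on the interior coordinates
  (the boundary coordinates are deterministic, given by config).\<close>
definition gamma :: "nat \<Rightarrow> real \<Rightarrow> real \<times> real \<times> real \<times> real \<Rightarrow> (int \<Rightarrow> real) measure" where
  "gamma N \<epsilon> r =
     density (interior_measure N \<epsilon>)
       (\<lambda>x. ennreal (exp (- hamiltonian N (config N r x)))
            / (\<integral>\<^sup>+ y. ennreal (exp (- hamiltonian N (config N r y))) \<partial>interior_measure N \<epsilon>))"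

text \<open>Rescaled profile h_N: linear interpolation of h_N(k/N) = phi_k / N^2, k = 0..N.\<close>
definition profile :: "nat \<Rightarrow> (int \<Rightarrow> real) \<Rightarrow> real \<Rightarrow> real" where
  "profile N \<phi> t =
     (let k = min (nat \<lfloor>real N * t\<rfloor>) (N - 1)
      in ((real k + 1 - real N * t) * \<phi> (int k) + (real N * t - real k) * \<phi> (int k + 1))
         / real N ^ 2)"

text \<open>C([0,1]) is represented inside the bounded continuous functions on the reals
  by constant extension outside [0,1] (an isometric, closed embedding for the sup norm).\<close>
definition clamp01 :: "real \<Rightarrow> real" where
  "clamp01 t = max 0 (min 1 t)"

definition ereal_ln :: "real \<Rightarrow> ereal" where
  "ereal_ln p = (if p \<le> 0 then - \<infinity> else ereal (ln p))"

end

theory Submission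
  imports Defs "HOL-Complex_Analysis.Great_Picard"
begin

text \<open>
  A profile h_N whose Hamiltonian is at most c N has slopes bounded by a constant depending only
  on c and the boundary data: every increment of phi is alpha N plus a partial sum of discrete
  Laplacians, and the sum of their absolute values is controlled by the Hamiltonian. Hence
  h_N lies in a set of uniformly bounded, uniformly Lipschitz functions, which is compact by
  Arzela-Ascoli. It remains to bound the probability of energy above c N: by Chebyshev's
  inequality for exp(H/2) it is at most exp(-c N/2) Z_{1/2} / Z, where integrating the sites out
  one at a time from the right gives Z_{1/2} \<le> (eps + sqrt(4 pi))^(N-1), and restricting to a unit
  box around the cubic interpolant of the boundary data gives Z \<ge> exp(-O(N)).
\<close>

definition lipschitz_profiles :: "real \<Rightarrow> real \<Rightarrow> (real \<Rightarrow>\<^sub>C real) set" where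
  "lipschitz_profiles B L =
     {f. (\<forall>t. apply_bcontfun f t = apply_bcontfun f (clamp01 t))
       \<and> (\<forall>t. \<bar>apply_bcontfun f t\<bar> \<le> B)
       \<and> (\<forall>s t. \<bar>apply_bcontfun f s - apply_bcontfun f t\<bar> \<le> L * \<bar>s - t\<bar>)}"

lemma clamp01_in_unit: "clamp01 t \<in> {0..1}"
  by (auto simp: clamp01_def)

lemma clamp01_idem: "clamp01 (clamp01 t) = clamp01 t"
  by (auto simp: clamp01_def)

lemma clamp01_lipschitz: "\<bar>clamp01 s - clamp01 t\<bar> \<le> \<bar>s - t\<bar>"
  by (auto simp: clamp01_def)

lemma Bcontfun_in_lipschitz_profiles:
  assumes L: "L \<ge> 0" and clamp: "\<And>t. h t = h (clamp01 t)" and bnd: "\<And>t. \<bar>h t\<bar> \<le> B"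
    and lip: "\<And>s t. \<bar>h s - h t\<bar> \<le> L * \<bar>s - t\<bar>"
  shows "apply_bcontfun (Bcontfun h) = h" and "Bcontfun h \<in> lipschitz_profiles B L"
proof -
  have "L-lipschitz_on UNIV h"
    by (rule lipschitz_onI) (use lip L in \<open>auto simp: dist_real_def\<close>)
  then have "h \<in> bcontfun"
    by (intro bcontfun_normI lipschitz_on_continuous_on) (use bnd in simp_all)
  then show h: "apply_bcontfun (Bcontfun h) = h"
    by (simp add: Bcontfun_inverse)
  show "Bcontfun h \<in> lipschitz_profiles B L"
    unfolding lipschitz_profiles_def mem_Collect_eq h using clamp bnd lip by blast
qed

lemma pointwise_limit_in_lipschitz_profiles:
  assumes L: "L \<ge> 0" and f: "\<And>n. f n \<in> lipschitz_profiles B L"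
    and lim: "\<And>t. t \<in> {0..1} \<Longrightarrow> (\<lambda>n. apply_bcontfun (f n) t) \<longlonglongrightarrow> g t"
  defines "h \<equiv> \<lambda>t. g (clamp01 t)"
  shows "apply_bcontfun (Bcontfun h) = h" and "Bcontfun h \<in> lipschitz_profiles B L"
proof -
  have f_lip: "\<bar>apply_bcontfun (f n) s - apply_bcontfun (f n) t\<bar> \<le> L * \<bar>s - t\<bar>" for n s t
    using f by (auto simp: lipschitz_profiles_def)
  have bnd: "\<bar>h t\<bar> \<le> B" for t
  proof -
    have "(\<lambda>n. \<bar>apply_bcontfun (f n) (clamp01 t)\<bar>) \<longlonglongrightarrow> \<bar>h t\<bar>"
      unfolding h_def by (intro tendsto_intros lim clamp01_in_unit)
    then show ?thesis
      by (rule LIMSEQ_le_const2) (use f in \<open>auto simp: lipschitz_profiles_def\<close>)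
  qed
  have lip: "\<bar>h s - h t\<bar> \<le> L * \<bar>s - t\<bar>" for s t
  proof -
    have "(\<lambda>n. \<bar>apply_bcontfun (f n) (clamp01 s) - apply_bcontfun (f n) (clamp01 t)\<bar>)
        \<longlonglongrightarrow> \<bar>h s - h t\<bar>"
      unfolding h_def by (intro tendsto_intros lim clamp01_in_unit)
    then have "\<bar>h s - h t\<bar> \<le> L * \<bar>clamp01 s - clamp01 t\<bar>"
      by (rule LIMSEQ_le_const2) (use f_lip in blast)
    also have "\<dots> \<le> L * \<bar>s - t\<bar>"
      using L clamp01_lipschitz by (rule mult_left_mono[rotated])
    finally show ?thesis .
  qed
  have "h t = h (clamp01 t)" for t
    by (simp add: h_def clamp01_idem)
  then show "apply_bcontfun (Bcontfun h) = h" and "Bcontfun h \<in> lipschitz_profiles B L"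
    using Bcontfun_in_lipschitz_profiles[OF L _ bnd lip] by blast+
qed

lemma LIMSEQ_clamp01_uniform:
  assumes clamp: "\<And>n t. apply_bcontfun (f n) t = apply_bcontfun (f n) (clamp01 t)"
    and l: "apply_bcontfun l = (\<lambda>t. g (clamp01 t))"
    and unif: "\<And>e. 0 < e \<Longrightarrow> \<exists>N. \<forall>n x. n \<ge> N \<and> x \<in> {0..1::real} \<longrightarrow> norm (apply_bcontfun (f n) x - g x) < e"
  shows "f \<longlonglongrightarrow> l"
proof (rule LIMSEQ_I)
  fix e :: real assume e: "0 < e"
  obtain N where N: "\<And>n x. n \<ge> N \<Longrightarrow> x \<in> {0..1} \<Longrightarrow> norm (apply_bcontfun (f n) x - g x) < e / 2"
    using unif[of "e / 2"] e by auto
  have "norm (f n - l) < e" if "n \<ge> N" for n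
  proof -
    have "dist (f n) l \<le> e / 2"
    proof (rule dist_bound)
      fix t
      show "dist (apply_bcontfun (f n) t) (apply_bcontfun l t) \<le> e / 2"
        using N[OF that clamp01_in_unit, of t] clamp[of n t] by (simp add: l dist_norm)
    qed
    then show ?thesis
      using e by (simp add: dist_norm)
  qed
  then show "\<exists>N. \<forall>n\<ge>N. norm (f n - l) < e"
    by blast
qed

lemma compact_lipschitz_profiles:
  assumes L: "L \<ge> 0"
  shows "compact (lipschitz_profiles B L)"
  unfolding compact_eq_seq_compact_metric seq_compact_def
proof (intro allI impI)
  fix f :: "nat \<Rightarrow> real \<Rightarrow>\<^sub>C real"
  assume "\<forall>n. f n \<in> lipschitz_profiles B L"
  then have f: "\<And>n. f n \<in> lipschitz_profiles B L" by blast
  let ?F = "\<lambda>n. apply_bcontfun (f n)"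
  have equicont: "\<exists>d>0. \<forall>n y. y \<in> {0..1} \<and> norm (x - y) < d \<longrightarrow> norm (?F n x - ?F n y) < e"
    if "0 < e" for x e :: real
  proof (intro exI[of _ "e / (L + 1)"] conjI allI impI)
    show "0 < e / (L + 1)" using that L by simp
    fix n y assume "y \<in> {0..1} \<and> norm (x - y) < e / (L + 1)"
    then have "(L + 1) * \<bar>x - y\<bar> < e" using L by (simp add: field_simps)
    moreover have "\<bar>?F n x - ?F n y\<bar> \<le> L * \<bar>x - y\<bar>"
      using f by (auto simp: lipschitz_profiles_def)
    ultimately show "norm (?F n x - ?F n y) < e" by (simp add: algebra_simps)
  qed
  obtain g k where k: "strict_mono (k :: nat \<Rightarrow> nat)"
    and unif: "\<And>e. 0 < e \<Longrightarrow> \<exists>N. \<forall>n x. n \<ge> N \<and> x \<in> {0..1::real} \<longrightarrow> norm (?F (k n) x - g x) < e"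
    by (rule Arzela_Ascoli[of "{0..1}" ?F B, OF compact_Icc _ equicont])
       (use f in \<open>auto simp: lipschitz_profiles_def\<close>)
  have lim: "(\<lambda>n. ?F (k n) t) \<longlonglongrightarrow> g t" if "t \<in> {0..1}" for t
    using unif that by (intro LIMSEQ_I) blast
  define h where "h = (\<lambda>t. g (clamp01 t))"
  note limit = pointwise_limit_in_lipschitz_profiles[OF L f lim, folded h_def]
  have "(f \<circ> k) \<longlonglongrightarrow> Bcontfun h"
  proof (rule LIMSEQ_clamp01_uniform)
    show "apply_bcontfun (Bcontfun h) = (\<lambda>t. g (clamp01 t))"
      using limit(1) by (simp add: h_def)
  qed (use f unif in \<open>auto simp: lipschitz_profiles_def\<close>)
  then show "\<exists>l\<in>lipschitz_profiles B L. \<exists>r. strict_mono r \<and> (f \<circ> r) \<longlonglongrightarrow> l"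
    using k limit(2) by blast
qed

lemma sum_increments_clamp01:
  fixes \<phi> :: "int \<Rightarrow> real"
  assumes N: "N \<ge> 1" and x0: "0 \<le> x" and xN: "x \<le> real N"
  defines "k \<equiv> min (nat \<lfloor>x\<rfloor>) (N - 1)"
  shows "(\<Sum>j<N. (\<phi> (int j + 1) - \<phi> (int j)) * clamp01 (x - real j))
         = \<phi> (int k) - \<phi> 0 + (x - real k) * (\<phi> (int k + 1) - \<phi> (int k))"
proof -
  have kN: "k < N" using N by (simp add: k_def)
  have kx: "real k \<le> x"
    using x0 unfolding k_def by (simp add: min_def) linarith
  have xk1: "x \<le> real k + 1"
    using x0 xN N unfolding k_def by (auto simp: min_def)
  let ?g = "\<lambda>j. (\<phi> (int j + 1) - \<phi> (int j)) * clamp01 (x - real j)"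
  have "(\<Sum>j<N. ?g j) = (\<Sum>j<Suc k. ?g j)"
  proof (rule sum.mono_neutral_right)
    show "\<forall>j\<in>{..<N} - {..<Suc k}. ?g j = 0"
      using xk1 by (auto simp: clamp01_def)
  qed (use kN in auto)
  also have "\<dots> = (\<Sum>j<k. \<phi> (int (Suc j)) - \<phi> (int j)) + ?g k"
  proof -
    have "?g j = \<phi> (int (Suc j)) - \<phi> (int j)" if "j < k" for j
    proof -
      have "clamp01 (x - real j) = 1" using that kx by (simp add: clamp01_def)
      then show ?thesis by (simp add: add.commute)
    qed
    then show ?thesis by simp
  qed
  also have "(\<Sum>j<k. \<phi> (int (Suc j)) - \<phi> (int j)) = \<phi> (int k) - \<phi> 0"
    using sum_lessThan_telescope[of "\<lambda>n. \<phi> (int n)" k] by simp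
  also have "clamp01 (x - real k) = x - real k"
    using kx xk1 by (simp add: clamp01_def)
  finally show ?thesis by simp
qed

lemma sum_clamp01_shifts:
  assumes "N \<ge> 1" "0 \<le> x" "x \<le> real N"
  shows "(\<Sum>j<N. clamp01 (x - real j)) = x"
  using sum_increments_clamp01[OF assms, of real_of_int] by simp

lemma profile_eq_sum_ramps:
  assumes N: "N \<ge> 1" and t: "t \<in> {0..1}"
  shows "profile N \<phi> t =
    (\<phi> 0 + (\<Sum>j<N. (\<phi> (int j + 1) - \<phi> (int j)) * clamp01 (real N * t - real j))) / real N ^ 2"
proof -
  have x0: "0 \<le> real N * t" and xN: "real N * t \<le> real N"
    using t by (auto simp: mult_left_le)
  show ?thesis
    unfolding profile_def Let_def sum_increments_clamp01[OF N x0 xN] by (simp add: algebra_simps)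
qed

lemma profile_lipschitz_ordered:
  fixes \<phi> :: "int \<Rightarrow> real"
  assumes N: "N \<ge> 1" and slope: "\<And>j. j < N \<Longrightarrow> \<bar>\<phi> (int j + 1) - \<phi> (int j)\<bar> \<le> L * real N"
    and t: "t \<in> {0..1}" and u: "u \<in> {0..1}" and ut: "u \<le> t"
  shows "\<bar>profile N \<phi> t - profile N \<phi> u\<bar> \<le> L * (t - u)"
proof -
  let ?s = "\<lambda>j. \<phi> (int j + 1) - \<phi> (int j)"
  let ?w = "\<lambda>j. clamp01 (real N * t - real j) - clamp01 (real N * u - real j)"
  have "real N * u \<le> real N * t"
    using ut by (simp add: mult_left_mono)
  then have w0: "0 \<le> ?w j" for j
    by (auto simp: clamp01_def)
  have "\<bar>profile N \<phi> t - profile N \<phi> u\<bar> = \<bar>\<Sum>j<N. ?s j * ?w j\<bar> / real N ^ 2"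
    unfolding profile_eq_sum_ramps[OF N t] profile_eq_sum_ramps[OF N u]
    by (simp add: diff_divide_distrib[symmetric] sum_subtractf[symmetric] algebra_simps)
  also have "\<dots> \<le> (\<Sum>j<N. L * real N * ?w j) / real N ^ 2"
  proof (intro divide_right_mono order.trans[OF sum_abs] sum_mono)
    fix j assume "j \<in> {..<N}"
    then show "\<bar>?s j * ?w j\<bar> \<le> L * real N * ?w j"
      using slope w0 by (simp add: abs_mult mult_right_mono)
  qed simp
  also have "(\<Sum>j<N. L * real N * ?w j) = L * real N * (real N * t - real N * u)"
    using t u by (simp add: sum_distrib_left[symmetric] sum_subtractf sum_clamp01_shifts[OF N]
        mult_left_le)
  also have "\<dots> / real N ^ 2 = L * (t - u)"
    using N by (simp add: power2_eq_square field_simps)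
  finally show ?thesis .
qed

lemma profile_lipschitz:
  fixes \<phi> :: "int \<Rightarrow> real"
  assumes N: "N \<ge> 1" and slope: "\<And>j. j < N \<Longrightarrow> \<bar>\<phi> (int j + 1) - \<phi> (int j)\<bar> \<le> L * real N"
    and t: "t \<in> {0..1}" and u: "u \<in> {0..1}"
  shows "\<bar>profile N \<phi> t - profile N \<phi> u\<bar> \<le> L * \<bar>t - u\<bar>"
  using profile_lipschitz_ordered[OF N slope t u] profile_lipschitz_ordered[OF N slope u t]
  by (cases "u \<le> t") (simp_all add: abs_minus_commute)

definition laplacian :: "(int \<Rightarrow> real) \<Rightarrow> int \<Rightarrow> real" where
  "laplacian \<phi> k = \<phi> (k + 1) + \<phi> (k - 1) - 2 * \<phi> k"

lemma hamiltonian_eq_sum_laplacian: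
  "hamiltonian N \<phi> = (\<Sum>k\<in>{0..int N}. (laplacian \<phi> k)\<^sup>2 / 2)"
  by (simp add: hamiltonian_def laplacian_def)

lemma increment_eq_sum_laplacian:
  "\<phi> (int j + 1) - \<phi> (int j) = \<phi> 0 - \<phi> (-1) + (\<Sum>i\<le>j. laplacian \<phi> (int i))"
proof (induction j)
  case 0
  then show ?case by (simp add: laplacian_def)
next
  case (Suc j)
  have "laplacian \<phi> (int (Suc j)) = \<phi> (int j + 2) + \<phi> (int j) - 2 * \<phi> (int j + 1)"
    by (simp add: laplacian_def add.commute)
  then show ?case
    using Suc by (simp add: add.commute add.left_commute)
qed

lemma sum_abs_laplacian_le_hamiltonian:
  "(\<Sum>i\<le>N. \<bar>laplacian \<phi> (int i)\<bar>) \<le> hamiltonian N \<phi> + (real N + 1) / 2"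
proof -
  have "\<bar>d\<bar> \<le> d\<^sup>2 / 2 + 1 / 2" for d :: real
    using sum_power2_ge_zero[of "\<bar>d\<bar> - 1" 0] by (simp add: power2_eq_square algebra_simps)
  then have "(\<Sum>i\<le>N. \<bar>laplacian \<phi> (int i)\<bar>) \<le> (\<Sum>i\<le>N. (laplacian \<phi> (int i))\<^sup>2 / 2 + 1 / 2)"
    by (intro sum_mono)
  also have "\<dots> = (\<Sum>k\<in>int ` {..N}. (laplacian \<phi> k)\<^sup>2 / 2) + (real N + 1) / 2"
    by (simp add: sum.distrib sum.reindex)
  also have "int ` {..N} = {0..int N}"
    by (simp add: image_int_atLeastAtMost atLeast0AtMost[symmetric])
  finally show ?thesis
    by (simp add: hamiltonian_eq_sum_laplacian)
qed

lemma config_increment_le: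
  assumes N: "N \<ge> 1" and r: "r = (a, \<alpha>, b, \<beta>)"
    and H: "hamiltonian N (config N r x) \<le> c * real N" and j: "j < N"
  shows "\<bar>config N r x (int j + 1) - config N r x (int j)\<bar> \<le> (\<bar>\<alpha>\<bar> + c + 1) * real N"
proof -
  let ?\<phi> = "config N r x" and ?S = "\<Sum>i\<le>j. laplacian (config N r x) (int i)"
  have "\<bar>?S\<bar> \<le> (\<Sum>i\<le>N. \<bar>laplacian ?\<phi> (int i)\<bar>)"
    using j by (intro order.trans[OF sum_abs] sum_mono2) auto
  moreover have "(real N + 1) / 2 \<le> real N"
    using N by simp
  ultimately have "\<bar>?S\<bar> \<le> c * real N + real N"
    using sum_abs_laplacian_le_hamiltonian[where N = N and \<phi> = ?\<phi>] H by linarith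
  moreover have "\<bar>\<alpha> * real N\<bar> = \<bar>\<alpha>\<bar> * real N"
    by (simp add: abs_mult)
  moreover have "?\<phi> 0 - ?\<phi> (-1) = \<alpha> * real N"
    using r N by (simp add: config_def)
  ultimately show ?thesis
    unfolding increment_eq_sum_laplacian[of ?\<phi> j]
    using abs_triangle_ineq[of "\<alpha> * real N" ?S] by (simp add: algebra_simps)
qed

lemma profile_in_lipschitz_profiles:
  assumes N: "N \<ge> 1" and r: "r = (a, \<alpha>, b, \<beta>)"
    and H: "hamiltonian N (config N r x) \<le> c * real N" and c: "c \<ge> 0"
  defines "L \<equiv> \<bar>\<alpha>\<bar> + c + 1"
  shows "(\<lambda>t. profile N (config N r x) (clamp01 t)) \<in> apply_bcontfun ` lipschitz_profiles (\<bar>a\<bar> + L) L"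
proof -
  let ?p = "profile N (config N r x)"
  define g where "g t = ?p (clamp01 t)" for t
  have L: "L \<ge> 0" using c by (simp add: L_def)
  have lip: "\<bar>g s - g t\<bar> \<le> L * \<bar>s - t\<bar>" for s t
  proof -
    have "\<bar>g s - g t\<bar> \<le> L * \<bar>clamp01 s - clamp01 t\<bar>"
      unfolding g_def L_def
      by (rule profile_lipschitz[OF N _ clamp01_in_unit clamp01_in_unit])
         (rule config_increment_le[OF N r H])
    also have "\<dots> \<le> L * \<bar>s - t\<bar>"
      using L clamp01_lipschitz by (rule mult_left_mono[rotated])
    finally show ?thesis .
  qed
  have clamp: "g t = g (clamp01 t)" for t
    by (simp add: g_def clamp01_idem)
  have "g 0 = a"
    using r N by (simp add: g_def clamp01_def profile_def config_def)
  then have "\<bar>g t - a\<bar> \<le> L * \<bar>clamp01 t - clamp01 0\<bar>" for t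
    using lip[of "clamp01 t" "clamp01 0"] clamp by metis
  moreover have "L * \<bar>clamp01 t - clamp01 0\<bar> \<le> L" for t
    using L clamp01_in_unit[of t] mult_left_mono[of _ 1 L] by (simp add: clamp01_def)
  ultimately have bnd: "\<bar>g t\<bar> \<le> \<bar>a\<bar> + L" for t
    using abs_triangle_ineq2[of "g t" a] by (smt (verit))
  from clamp show ?thesis
    using Bcontfun_in_lipschitz_profiles[OF L _ bnd lip] unfolding g_def by (metis image_eqI)
qed

lemma sets_ref_measure [simp]: "sets (ref_measure \<epsilon>) = sets borel"
  unfolding ref_measure_def by (metis sets_measure_of sets.sigma_sets_eq space_borel sets.space_closed)

lemma space_ref_measure [simp]: "space (ref_measure \<epsilon>) = UNIV"
  unfolding ref_measure_def by (simp add: space_measure_of_conv)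

lemma measurable_ref_measure_iff [simp]: "measurable (ref_measure \<epsilon>) M = measurable borel M"
  by (rule measurable_cong_sets) auto

lemma emeasure_ref_measure:
  assumes "A \<in> sets borel"
  shows "emeasure (ref_measure \<epsilon>) A = ennreal \<epsilon> * indicator A 0 + emeasure lborel A"
  unfolding ref_measure_def
proof (rule emeasure_measure_of_sigma[OF _ _ _ assms])
  show "sigma_algebra UNIV (sets borel)"
    using sets.sigma_algebra_axioms[of borel] by simp
  show "positive (sets borel) (\<lambda>A. ennreal \<epsilon> * indicator A (0::real) + emeasure lborel A)"
    by (simp add: positive_def)
  show "countably_additive (sets borel) (\<lambda>A. ennreal \<epsilon> * indicator A (0::real) + emeasure lborel A)"
  proof (rule countably_additiveI)
    fix A :: "nat \<Rightarrow> real set" assume A: "range A \<subseteq> sets borel" "disjoint_family A"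
    have "(\<Sum>i. ennreal \<epsilon> * indicator (A i) 0 + emeasure lborel (A i))
        = ennreal \<epsilon> * (\<Sum>i. indicator (A i) 0) + (\<Sum>i. emeasure lborel (A i))"
      by (simp add: suminf_add[symmetric] ennreal_suminf_cmult)
    then show "(\<Sum>i. ennreal \<epsilon> * indicator (A i) 0 + emeasure lborel (A i)) =
        ennreal \<epsilon> * indicator (\<Union>i. A i) 0 + emeasure lborel (\<Union>i. A i)"
      using A by (simp add: suminf_indicator suminf_emeasure image_subset_iff)
  qed
qed

lemma sigma_finite_ref_measure: "sigma_finite_measure (ref_measure \<epsilon>)"
proof
  let ?A = "range (\<lambda>n::nat. {- real n..real n})"
  have "y \<in> \<Union> ?A" for y :: real
  proof -
    obtain n :: nat where "\<bar>y\<bar> \<le> real n"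
      using real_arch_simple by blast
    then show ?thesis by (auto intro!: exI[of _ n])
  qed
  then have "\<Union> ?A = UNIV" by auto
  moreover have "emeasure (ref_measure \<epsilon>) {- real n..real n} \<noteq> \<infinity>" for n
    by (simp add: emeasure_ref_measure ennreal_mult_less_top indicator_def)
  ultimately show "\<exists>A. countable A \<and> A \<subseteq> sets (ref_measure \<epsilon>) \<and> \<Union> A = space (ref_measure \<epsilon>)
      \<and> (\<forall>a\<in>A. emeasure (ref_measure \<epsilon>) a \<noteq> \<infinity>)"
    by (intro exI[of _ ?A]) auto
qed

lemma nn_integral_ref_measure:
  assumes "f \<in> borel_measurable borel"
  shows "(\<integral>\<^sup>+ y. f y \<partial>ref_measure \<epsilon>) = ennreal \<epsilon> * f 0 + (\<integral>\<^sup>+ y. f y \<partial>lborel)"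
  using assms
proof (induction rule: borel_measurable_induct)
  case (cong f g)
  then have "f = g" by auto
  with cong show ?case by simp
next
  case (set A)
  then show ?case by (simp add: emeasure_ref_measure)
next
  case (mult u c)
  then show ?case by (simp add: nn_integral_cmult algebra_simps)
next
  case (add u v)
  then show ?case by (simp add: nn_integral_add algebra_simps)
next
  case (seq U)
  have mono: "incseq (\<lambda>i. U i y)" for y
    using \<open>incseq U\<close> unfolding incseq_def le_fun_def by blast
  have "(\<integral>\<^sup>+ y. (SUP i. U i) y \<partial>ref_measure \<epsilon>) = (SUP i. ennreal \<epsilon> * U i 0 + (\<integral>\<^sup>+ y. U i y \<partial>lborel))"
    unfolding SUP_apply using seq by (simp add: nn_integral_monotone_convergence_SUP)
  also have "\<dots> = ennreal \<epsilon> * (SUP i. U i 0) + (SUP i. (\<integral>\<^sup>+ y. U i y \<partial>lborel))"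
  proof (subst ennreal_SUP_add)
    show "incseq (\<lambda>i. ennreal \<epsilon> * U i 0)"
      using mono[of 0] by (auto simp: incseq_def intro: mult_left_mono)
    show "incseq (\<lambda>i. \<integral>\<^sup>+ y. U i y \<partial>lborel)"
      using mono by (auto simp: incseq_def intro: nn_integral_mono)
  qed (simp add: SUP_mult_left_ennreal)
  also have "(SUP i. (\<integral>\<^sup>+ y. U i y \<partial>lborel)) = (\<integral>\<^sup>+ y. (SUP i. U i) y \<partial>lborel)"
    unfolding SUP_apply using seq by (simp add: nn_integral_monotone_convergence_SUP)
  finally show ?case by (simp only: SUP_apply)
qed

lemma measurable_component_ref_measure [measurable]:
  "(\<lambda>x. x j) \<in> borel_measurable (PiM I (\<lambda>_. ref_measure \<epsilon>))"
proof (cases "j \<in> I")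
  case True
  then show ?thesis
    using measurable_component_singleton[OF True, of "\<lambda>_. ref_measure \<epsilon>"]
    by (simp add: measurable_cong_sets[OF refl sets_ref_measure])
next
  case False
  then have "x j = undefined" if "x \<in> space (PiM I (\<lambda>_. ref_measure \<epsilon>))" for x
    using that by (auto simp: space_PiM PiE_def extensional_def)
  then show ?thesis
    by (subst measurable_cong[where g = "\<lambda>_. undefined"]) simp_all
qed

lemma measurable_config [measurable]:
  "(\<lambda>x. config N r x k) \<in> borel_measurable (PiM I (\<lambda>_. ref_measure \<epsilon>))"
  unfolding config_def by (cases r) simp

lemma measurable_hamiltonian_config [measurable]:
  "(\<lambda>x. hamiltonian N (config N r x)) \<in> borel_measurable (PiM I (\<lambda>_. ref_measure \<epsilon>))"
  unfolding hamiltonian_def by measurable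

lemma nn_integral_lborel_gaussian:
  "(\<integral>\<^sup>+ y. ennreal (exp (- ((y + c)\<^sup>2 / 4))) \<partial>lborel) = ennreal (sqrt (4 * pi))"
proof -
  have "exp (- ((y + c)\<^sup>2 / 4)) = sqrt (4 * pi) * normal_density (-c) (sqrt 2) y" for y
    by (simp add: normal_density_def real_sqrt_mult)
  then have "(\<integral>\<^sup>+ y. ennreal (exp (- ((y + c)\<^sup>2 / 4))) \<partial>lborel)
      = ennreal (sqrt (4 * pi)) * (\<integral>\<^sup>+ y. ennreal (normal_density (-c) (sqrt 2) y) \<partial>lborel)"
    by (simp add: ennreal_mult nn_integral_cmult)
  also have "(\<integral>\<^sup>+ y. ennreal (normal_density (-c) (sqrt 2) y) \<partial>lborel) = 1"
    by (subst nn_integral_eq_integral) auto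
  finally show ?thesis by simp
qed

lemma nn_integral_ref_measure_gaussian_le:
  assumes "\<epsilon> \<ge> 0"
  shows "(\<integral>\<^sup>+ y. ennreal (exp (- ((y + c)\<^sup>2 / 4))) \<partial>ref_measure \<epsilon>) \<le> ennreal (\<epsilon> + sqrt (4 * pi))"
proof -
  have "(\<integral>\<^sup>+ y. ennreal (exp (- ((y + c)\<^sup>2 / 4))) \<partial>ref_measure \<epsilon>)
      = ennreal \<epsilon> * ennreal (exp (- ((0 + c)\<^sup>2 / 4))) + ennreal (sqrt (4 * pi))"
    by (rule nn_integral_ref_measure[THEN trans]) (simp_all only: nn_integral_lborel_gaussian, simp)
  also have "\<dots> \<le> ennreal \<epsilon> * 1 + ennreal (sqrt (4 * pi))"
    by (intro add_mono mult_left_mono) auto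
  also have "\<dots> = ennreal (\<epsilon> + sqrt (4 * pi))"
    using assms by simp
  finally show ?thesis .
qed

text \<open>
  Dropping the Laplacians at the last sites frees the right boundary: in the remaining weight the
  site k + 1 enters only the factor at k, so the sites can be integrated out from the right, one
  Gaussian factor at a time.
\<close>

definition left_pinned :: "real \<Rightarrow> real \<Rightarrow> (int \<Rightarrow> real) \<Rightarrow> int \<Rightarrow> real" where
  "left_pinned u v x j = (if j = -1 then u else if j = 0 then v else x j)"

definition left_weight :: "real \<Rightarrow> real \<Rightarrow> nat \<Rightarrow> (int \<Rightarrow> real) \<Rightarrow> real" where
  "left_weight u v m x = (\<Prod>k<m. exp (- ((laplacian (left_pinned u v x) (int k))\<^sup>2 / 4)))"

lemma measurable_left_weight [measurable]:
  "left_weight u v m \<in> borel_measurable (PiM I (\<lambda>_. ref_measure \<epsilon>))"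
  unfolding left_weight_def laplacian_def left_pinned_def by measurable

lemma left_weight_Suc_update:
  "left_weight u v (Suc m) (x(int m + 1 := y)) = left_weight u v m x *
     exp (- ((y + (left_pinned u v x (int m - 1) - 2 * left_pinned u v x (int m)))\<^sup>2 / 4))"
proof -
  have same: "left_pinned u v (x(int m + 1 := y)) i = left_pinned u v x i" if "i \<le> int m" for i
    using that by (auto simp: left_pinned_def)
  have "left_weight u v m (x(int m + 1 := y)) = left_weight u v m x"
    unfolding left_weight_def laplacian_def by (intro prod.cong) (auto simp: same)
  moreover have "laplacian (left_pinned u v (x(int m + 1 := y))) (int m)
      = y + (left_pinned u v x (int m - 1) - 2 * left_pinned u v x (int m))"
    by (simp add: laplacian_def same) (simp add: left_pinned_def)
  ultimately show ?thesis
    by (simp add: left_weight_def)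
qed

lemma nn_integral_left_weight_le:
  assumes eps: "\<epsilon> \<ge> 0"
  shows "(\<integral>\<^sup>+ x. ennreal (left_weight u v m x) \<partial>PiM {1..int m} (\<lambda>_. ref_measure \<epsilon>))
    \<le> ennreal (\<epsilon> + sqrt (4 * pi)) ^ m"
proof (induction m)
  case 0
  then show ?case
    by (simp add: left_weight_def PiM_empty nn_integral_count_space_finite)
next
  case (Suc m)
  interpret product_sigma_finite "\<lambda>_::int. ref_measure \<epsilon>"
    by (simp add: product_sigma_finite_def sigma_finite_ref_measure)
  let ?P = "PiM {1..int m} (\<lambda>_. ref_measure \<epsilon>)" and ?G = "ennreal (\<epsilon> + sqrt (4 * pi))"
  have "{1..int (Suc m)} = insert (int m + 1) {1..int m}" by auto
  then have "(\<integral>\<^sup>+ x. ennreal (left_weight u v (Suc m) x) \<partial>PiM {1..int (Suc m)} (\<lambda>_. ref_measure \<epsilon>))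
      = (\<integral>\<^sup>+ x. (\<integral>\<^sup>+ y. ennreal (left_weight u v (Suc m) (x(int m + 1 := y))) \<partial>ref_measure \<epsilon>) \<partial>?P)"
    by (simp add: product_nn_integral_insert)
  also have "\<dots> \<le> (\<integral>\<^sup>+ x. ennreal (left_weight u v m x) * ?G \<partial>?P)"
  proof (rule nn_integral_mono)
    fix x
    have "0 \<le> left_weight u v m x"
      by (simp add: left_weight_def prod_nonneg)
    then show "(\<integral>\<^sup>+ y. ennreal (left_weight u v (Suc m) (x(int m + 1 := y))) \<partial>ref_measure \<epsilon>)
        \<le> ennreal (left_weight u v m x) * ?G"
      by (simp add: left_weight_Suc_update ennreal_mult nn_integral_cmult)
         (intro mult_left_mono nn_integral_ref_measure_gaussian_le[OF eps]; simp)
  qed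
  also have "\<dots> = (\<integral>\<^sup>+ x. ennreal (left_weight u v m x) \<partial>?P) * ?G"
    by (simp add: nn_integral_multc)
  also have "\<dots> \<le> ?G ^ Suc m"
    using Suc.IH by (simp add: mult.commute mult_left_mono)
  finally show ?case .
qed

lemma exp_half_hamiltonian_le_left_weight:
  assumes N: "N \<ge> 2" and r: "r = (a, \<alpha>, b, \<beta>)"
  shows "exp (- hamiltonian N (config N r x) / 2)
    \<le> left_weight (a * real N ^ 2 - \<alpha> * real N) (a * real N ^ 2) (N - 1) x"
proof -
  let ?u = "a * real N ^ 2 - \<alpha> * real N" and ?v = "a * real N ^ 2"
  let ?\<phi> = "config N r x"
  have "?\<phi> j = left_pinned ?u ?v x j" if "j \<le> int N - 1" for j
    using that r by (auto simp: config_def left_pinned_def)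
  then have lap: "laplacian (left_pinned ?u ?v x) (int k) = laplacian ?\<phi> (int k)" if "k < N - 1" for k
    using that by (simp add: laplacian_def)
  have "(\<Sum>k<N - 1. (laplacian (left_pinned ?u ?v x) (int k))\<^sup>2 / 4)
      = (\<Sum>k\<in>int ` {..<N - 1}. (laplacian ?\<phi> k)\<^sup>2 / 4)"
    by (simp add: sum.reindex lap)
  also have "\<dots> \<le> (\<Sum>k\<in>{0..int N}. (laplacian ?\<phi> k)\<^sup>2 / 4)"
    by (rule sum_mono2) auto
  also have "\<dots> = hamiltonian N ?\<phi> / 2"
    by (simp add: hamiltonian_eq_sum_laplacian sum_divide_distrib)
  finally show ?thesis
    by (simp add: left_weight_def exp_sum[symmetric] sum_negf)
qed

lemma nn_integral_exp_half_hamiltonian_le: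
  assumes N: "N \<ge> 2" and eps: "\<epsilon> \<ge> 0"
  shows "(\<integral>\<^sup>+ x. ennreal (exp (- hamiltonian N (config N r x) / 2)) \<partial>interior_measure N \<epsilon>)
    \<le> ennreal (\<epsilon> + sqrt (4 * pi)) ^ (N - 1)"
proof -
  obtain a \<alpha> b \<beta> where r: "r = (a, \<alpha>, b, \<beta>)" by (cases r)
  have I: "{1..int N - 1} = {1..int (N - 1)}" using N by simp
  have "(\<integral>\<^sup>+ x. ennreal (exp (- hamiltonian N (config N r x) / 2)) \<partial>interior_measure N \<epsilon>)
      \<le> (\<integral>\<^sup>+ x. ennreal (left_weight (a * real N ^ 2 - \<alpha> * real N) (a * real N ^ 2) (N - 1) x)
          \<partial>PiM {1..int (N - 1)} (\<lambda>_. ref_measure \<epsilon>))"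
    unfolding interior_measure_def I
    by (intro nn_integral_mono ennreal_leI exp_half_hamiltonian_le_left_weight[OF N r])
  also have "\<dots> \<le> ennreal (\<epsilon> + sqrt (4 * pi)) ^ (N - 1)"
    by (rule nn_integral_left_weight_le[OF eps])
  finally show ?thesis .
qed

text \<open>
  N^2 p(k/N) for the cubic Hermite interpolant p with p(0) = a, p'(0) = alpha, p(1) = b,
  p'(1) = beta. It matches the pinned values exactly at 0 and N and up to O(1) at -1 and N + 1,
  and its discrete Laplacian is bounded uniformly in N.
\<close>

definition cubic_coeff2 :: "real \<times> real \<times> real \<times> real \<Rightarrow> real" where
  "cubic_coeff2 r = (case r of (a, \<alpha>, b, \<beta>) \<Rightarrow> 3 * (b - a) - 2 * \<alpha> - \<beta>)"

definition cubic_coeff3 :: "real \<times> real \<times> real \<times> real \<Rightarrow> real" where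
  "cubic_coeff3 r = (case r of (a, \<alpha>, b, \<beta>) \<Rightarrow> 2 * (a - b) + \<alpha> + \<beta>)"

definition cubic_interpolant :: "nat \<Rightarrow> real \<times> real \<times> real \<times> real \<Rightarrow> int \<Rightarrow> real" where
  "cubic_interpolant N r k = (case r of (a, \<alpha>, b, \<beta>) \<Rightarrow>
      a * real N ^ 2 + \<alpha> * real N * of_int k + cubic_coeff2 r * (of_int k)\<^sup>2
      + cubic_coeff3 r * (of_int k) ^ 3 / real N)"

definition cubic_boundary_error :: "real \<times> real \<times> real \<times> real \<Rightarrow> real" where
  "cubic_boundary_error r = 1 + \<bar>cubic_coeff2 r\<bar> + 4 * \<bar>cubic_coeff3 r\<bar>"

definition cubic_laplacian_bound :: "real \<times> real \<times> real \<times> real \<Rightarrow> real" where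
  "cubic_laplacian_bound r = 2 * \<bar>cubic_coeff2 r\<bar> + 6 * \<bar>cubic_coeff3 r\<bar> + 4 * cubic_boundary_error r"

lemma laplacian_cubic_interpolant:
  assumes "N \<ge> 1"
  shows "laplacian (cubic_interpolant N r) k = 2 * cubic_coeff2 r + 6 * cubic_coeff3 r * (of_int k / real N)"
  using assms by (cases r) (simp add: laplacian_def cubic_interpolant_def field_simps
      power2_eq_square power3_eq_cube)

lemma config_near_cubic_interpolant:
  assumes N: "N \<ge> 1" and box: "\<And>k. k \<in> {1..int N - 1} \<Longrightarrow> \<bar>x k - cubic_interpolant N r k\<bar> \<le> 1"
    and k: "-1 \<le> k" "k \<le> int N + 1"
  shows "\<bar>config N r x k - cubic_interpolant N r k\<bar> \<le> cubic_boundary_error r"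
proof -
  obtain a \<alpha> b \<beta> where r: "r = (a, \<alpha>, b, \<beta>)" by (cases r)
  let ?c2 = "cubic_coeff2 r" and ?c3 = "cubic_coeff3 r"
  have "\<bar>v / real N\<bar> \<le> \<bar>v\<bar>" for v
    using N by (simp add: abs_divide divide_le_eq mult_le_cancel_left1)
  then have near: "\<bar>u + v / real N\<bar> \<le> \<bar>u\<bar> + \<bar>v\<bar>" for u v
    using abs_triangle_ineq[of u "v / real N"] by (smt (verit))
  consider "k = -1" | "k = 0" | "k = int N" | "k = int N + 1" | "k \<in> {1..int N - 1}"
    using k by force
  then show ?thesis
  proof cases
    case 1
    then have "config N r x k - cubic_interpolant N r k = - ?c2 + ?c3 / real N"
      using r N by (simp add: config_def cubic_interpolant_def field_simps power2_eq_square
          power3_eq_cube)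
    then have "\<bar>config N r x k - cubic_interpolant N r k\<bar> \<le> \<bar>- ?c2\<bar> + \<bar>?c3\<bar>"
      using near[of "- ?c2" ?c3] by (simp only:)
    then show ?thesis
      unfolding cubic_boundary_error_def abs_minus_cancel using abs_ge_zero[of ?c3] by linarith
  next
    case 2
    then show ?thesis using r N by (simp add: config_def cubic_interpolant_def cubic_boundary_error_def)
  next
    case 3
    then have "config N r x k - cubic_interpolant N r k = 0"
      using r N by (simp add: config_def cubic_interpolant_def cubic_coeff2_def cubic_coeff3_def
          field_simps power2_eq_square power3_eq_cube)
    then show ?thesis by (simp add: cubic_boundary_error_def)
  next
    case 4
    then have "config N r x k - cubic_interpolant N r k = - (?c2 + 3 * ?c3) + - ?c3 / real N"
      using r N by (simp add: config_def cubic_interpolant_def cubic_coeff2_def cubic_coeff3_def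
          field_simps power2_eq_square power3_eq_cube)
    then have "\<bar>config N r x k - cubic_interpolant N r k\<bar> \<le> \<bar>?c2 + 3 * ?c3\<bar> + \<bar>?c3\<bar>"
      using near[of "- (?c2 + 3 * ?c3)" "- ?c3"] by (simp only: abs_minus_cancel)
    moreover have "\<bar>?c2 + 3 * ?c3\<bar> \<le> \<bar>?c2\<bar> + 3 * \<bar>?c3\<bar>"
      using abs_triangle_ineq[of ?c2 "3 * ?c3"] by (simp add: abs_mult)
    ultimately show ?thesis
      unfolding cubic_boundary_error_def by linarith
  next
    case 5
    then have "config N r x k = x k" using r by (auto simp: config_def)
    then show ?thesis using box[OF 5] by (simp add: cubic_boundary_error_def)
  qed
qed

lemma hamiltonian_near_cubic_interpolant_le:
  assumes N: "N \<ge> 1" and box: "\<And>k. k \<in> {1..int N - 1} \<Longrightarrow> \<bar>x k - cubic_interpolant N r k\<bar> \<le> 1"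
  shows "hamiltonian N (config N r x) \<le> (real N + 1) * (cubic_laplacian_bound r)\<^sup>2 / 2"
proof -
  let ?\<phi> = "config N r x" and ?q = "cubic_interpolant N r" and ?E = "cubic_boundary_error r"
  have lap: "\<bar>laplacian ?\<phi> k\<bar> \<le> cubic_laplacian_bound r" if k: "k \<in> {0..int N}" for k
  proof -
    have near: "\<bar>?\<phi> j - ?q j\<bar> \<le> ?E" if "j \<in> {k - 1, k, k + 1}" for j
      using that k by (intro config_near_cubic_interpolant[OF N box]) auto
    have "\<bar>of_int k / real N\<bar> \<le> 1"
      using k N by auto
    then have "\<bar>6 * cubic_coeff3 r * (of_int k / real N)\<bar> \<le> 6 * \<bar>cubic_coeff3 r\<bar> * 1"
      unfolding abs_mult abs_numeral by (intro mult_left_mono) auto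
    moreover have "laplacian ?\<phi> k = laplacian ?q k + ((?\<phi> (k + 1) - ?q (k + 1))
        + (?\<phi> (k - 1) - ?q (k - 1)) - 2 * (?\<phi> k - ?q k))"
      by (simp add: laplacian_def)
    ultimately show ?thesis
      using near[of "k - 1"] near[of k] near[of "k + 1"]
      unfolding laplacian_cubic_interpolant[OF N] cubic_laplacian_bound_def abs_le_iff
      by auto
  qed
  have "hamiltonian N ?\<phi> \<le> of_nat (card {0..int N}) * ((cubic_laplacian_bound r)\<^sup>2 / 2)"
    unfolding hamiltonian_eq_sum_laplacian
    using power_mono[OF lap abs_ge_zero, of _ 2] by (intro sum_bounded_above divide_right_mono) auto
  then show ?thesis by simp
qed

lemma partition_function_ge:
  assumes N: "N \<ge> 1" and eps: "\<epsilon> \<ge> 0"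
  shows "ennreal (exp (- ((real N + 1) * (cubic_laplacian_bound r)\<^sup>2 / 2)))
    \<le> (\<integral>\<^sup>+ x. ennreal (exp (- hamiltonian N (config N r x))) \<partial>interior_measure N \<epsilon>)"
proof -
  interpret product_sigma_finite "\<lambda>_::int. ref_measure \<epsilon>"
    by (simp add: product_sigma_finite_def sigma_finite_ref_measure)
  let ?I = "{1..int N - 1}" and ?q = "cubic_interpolant N r"
  let ?box = "PiE ?I (\<lambda>k. {?q k - 1..?q k + 1})"
  let ?c = "ennreal (exp (- ((real N + 1) * (cubic_laplacian_bound r)\<^sup>2 / 2)))"
  have box: "?box \<in> sets (PiM ?I (\<lambda>_. ref_measure \<epsilon>))"
    by (rule sets_PiM_I_finite) auto
  have unit: "1 \<le> emeasure (ref_measure \<epsilon>) {?q k - 1..?q k + 1}" for k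
  proof -
    have "(1::ennreal) \<le> emeasure lborel {?q k - 1..?q k + 1}" by simp
    also have "\<dots> \<le> emeasure (ref_measure \<epsilon>) {?q k - 1..?q k + 1}"
      by (simp add: emeasure_ref_measure)
    finally show ?thesis .
  qed
  have "1 \<le> (\<Prod>k\<in>?I. emeasure (ref_measure \<epsilon>) {?q k - 1..?q k + 1})"
    using unit by (rule prod_ge_1)
  also have "\<dots> = emeasure (PiM ?I (\<lambda>_. ref_measure \<epsilon>)) ?box"
    by (rule emeasure_PiM[symmetric]) auto
  finally have box_ge_1: "1 \<le> emeasure (PiM ?I (\<lambda>_. ref_measure \<epsilon>)) ?box" .
  have "?c \<le> ?c * emeasure (PiM ?I (\<lambda>_. ref_measure \<epsilon>)) ?box"
    using mult_left_mono[OF box_ge_1 zero_le, of ?c] by (simp only: mult_1_right)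
  also have "\<dots> = (\<integral>\<^sup>+ x. ?c * indicator ?box x \<partial>PiM ?I (\<lambda>_. ref_measure \<epsilon>))"
    by (rule nn_integral_cmult_indicator[symmetric, OF box])
  also have "\<dots> \<le> (\<integral>\<^sup>+ x. ennreal (exp (- hamiltonian N (config N r x))) \<partial>PiM ?I (\<lambda>_. ref_measure \<epsilon>))"
  proof (rule nn_integral_mono)
    fix x
    show "?c * indicator ?box x \<le> ennreal (exp (- hamiltonian N (config N r x)))"
    proof (cases "x \<in> ?box")
      case True
      then have "\<bar>x k - ?q k\<bar> \<le> 1" if "k \<in> ?I" for k
        using that by (auto simp: PiE_def Pi_def)
      then show ?thesis
        using True hamiltonian_near_cubic_interpolant_le[OF N] by simp
    qed simp
  qed
  finally show ?thesis unfolding interior_measure_def .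
qed

lemma gamma_high_energy_le:
  assumes N: "N \<ge> 2" and eps: "\<epsilon> \<ge> 0"
  shows "emeasure (gamma N \<epsilon> r)
      {x \<in> space (interior_measure N \<epsilon>). c * real N < hamiltonian N (config N r x)}
    \<le> ennreal (exp (- (c * real N / 2)) * (\<epsilon> + sqrt (4 * pi)) ^ (N - 1)
       / exp (- ((real N + 1) * (cubic_laplacian_bound r)\<^sup>2 / 2)))"
proof -
  let ?M = "interior_measure N \<epsilon>" and ?H = "\<lambda>x. hamiltonian N (config N r x)"
  define Z where "Z = (\<integral>\<^sup>+ y. ennreal (exp (- ?H y)) \<partial>?M)"
  define E where "E = exp (- (c * real N / 2))"
  define G where "G = \<epsilon> + sqrt (4 * pi)"
  define z where "z = exp (- ((real N + 1) * (cubic_laplacian_bound r)\<^sup>2 / 2))"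
  define T where "T = {x \<in> space ?M. c * real N < ?H x}"
  have gamma: "gamma N \<epsilon> r = density ?M (\<lambda>x. ennreal (exp (- ?H x)) / Z)"
    unfolding gamma_def Z_def ..
  have [measurable]: "?H \<in> borel_measurable ?M"
    unfolding interior_measure_def by measurable
  have [measurable]: "T \<in> sets ?M"
    unfolding T_def by measurable
  have Z: "ennreal z \<le> Z"
    unfolding z_def Z_def using N eps by (intro partition_function_ge) auto
  have z: "z > 0" by (simp add: z_def)
  have G0: "G \<ge> 0" using eps by (simp add: G_def)
  have "exp (- ?H x) \<le> E * exp (- ?H x / 2)" if "x \<in> T" for x
    using that by (simp add: T_def E_def exp_add[symmetric])
  then have "emeasure (gamma N \<epsilon> r) T \<le> (\<integral>\<^sup>+ x. ennreal (E * exp (- ?H x / 2)) / Z \<partial>?M)"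
    unfolding gamma by (subst emeasure_density) (auto simp: divide_ennreal_def
        split: split_indicator intro!: nn_integral_mono mult_right_mono ennreal_leI)
  also have "\<dots> = ennreal E * (\<integral>\<^sup>+ x. ennreal (exp (- ?H x / 2)) \<partial>?M) / Z"
    by (simp add: divide_ennreal_def ennreal_mult E_def nn_integral_multc nn_integral_cmult
        interior_measure_def mult.assoc)
  also have "\<dots> \<le> ennreal (E * G ^ (N - 1) / z)"
  proof (rule divide_le_posI_ennreal)
    show "0 < Z"
      using Z z by (metis ennreal_less_zero_iff less_le_trans)
    have "ennreal E * (\<integral>\<^sup>+ x. ennreal (exp (- ?H x / 2)) \<partial>?M) \<le> ennreal E * ennreal G ^ (N - 1)"
      unfolding G_def by (intro mult_left_mono nn_integral_exp_half_hamiltonian_le N eps) simp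
    also have "\<dots> = ennreal z * ennreal (E * G ^ (N - 1) / z)"
      using z G0 by (simp add: ennreal_mult[symmetric] ennreal_power E_def)
    also have "\<dots> \<le> Z * ennreal (E * G ^ (N - 1) / z)"
      by (intro mult_right_mono Z) simp
    finally show "ennreal E * (\<integral>\<^sup>+ x. ennreal (exp (- ?H x / 2)) \<partial>?M) \<le> Z * ennreal (E * G ^ (N - 1) / z)" .
  qed
  finally show ?thesis
    by (simp add: T_def E_def G_def z_def)
qed

definition escape_event ::
    "nat \<Rightarrow> real \<Rightarrow> real \<times> real \<times> real \<times> real \<Rightarrow> (real \<Rightarrow>\<^sub>C real) set \<Rightarrow> (int \<Rightarrow> real) set" where
  "escape_event N \<epsilon> r K = {x \<in> space (gamma N \<epsilon> r).
     (\<lambda>t. profile N (config N r x) (clamp01 t)) \<notin> apply_bcontfun ` K}"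

lemma gamma_escape_lipschitz_profiles_le:
  assumes N: "N \<ge> 2" and eps: "\<epsilon> \<ge> 0" and r: "r = (a, \<alpha>, b, \<beta>)" and c: "c \<ge> 0"
  defines "L \<equiv> \<bar>\<alpha>\<bar> + c + 1"
  shows "measure (gamma N \<epsilon> r) (escape_event N \<epsilon> r (lipschitz_profiles (\<bar>a\<bar> + L) L))
    \<le> exp (- (c * real N / 2)) * (\<epsilon> + sqrt (4 * pi)) ^ (N - 1)
       / exp (- ((real N + 1) * (cubic_laplacian_bound r)\<^sup>2 / 2))"
    (is "measure _ ?S \<le> ?R")
proof -
  let ?T = "{x \<in> space (interior_measure N \<epsilon>). c * real N < hamiltonian N (config N r x)}"
  have space: "space (gamma N \<epsilon> r) = space (interior_measure N \<epsilon>)"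
    by (simp add: gamma_def)
  have "?S \<subseteq> ?T"
  proof
    fix x assume x: "x \<in> ?S"
    then have "\<not> hamiltonian N (config N r x) \<le> c * real N"
      using profile_in_lipschitz_profiles[OF _ r _ c, of N x] N unfolding L_def
      by (auto simp: escape_event_def)
    then show "x \<in> ?T" using x space by (auto simp: escape_event_def)
  qed
  moreover have "?T \<in> sets (gamma N \<epsilon> r)"
    by (simp add: gamma_def interior_measure_def)
  ultimately have "emeasure (gamma N \<epsilon> r) ?S \<le> ennreal ?R"
    using gamma_high_energy_le[OF N eps] by (blast intro: emeasure_mono order_trans)
  then show ?thesis
    unfolding measure_def by (rule enn2real_leI[rotated]) (use eps in simp)
qed

lemma tail_bound_le_exp:
  assumes N: "N \<ge> 1" and G: "G \<ge> 1" and C: "C \<ge> 0" and c: "M + ln G + C \<le> c / 2"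
  shows "exp (- (c * real N / 2)) * G ^ (N - 1) / exp (- ((real N + 1) * C / 2)) \<le> exp (- M * real N)"
proof -
  have "C \<le> real N * C"
    using N C by (simp add: mult_le_cancel_right1)
  then have "(real N + 1) * C / 2 \<le> real N * C"
    by (simp add: field_simps)
  moreover have "real (N - 1) * ln G \<le> real N * ln G"
    using G by (intro mult_right_mono) auto
  moreover have "real N * M + real N * ln G + real N * C \<le> c * real N / 2"
    using mult_left_mono[OF c, of "real N"] by (simp add: algebra_simps)
  ultimately have exponent:
    "- (c * real N / 2) + real (N - 1) * ln G - - ((real N + 1) * C / 2) \<le> - M * real N"
    by (simp add: field_simps)
  have "G ^ (N - 1) = exp (real (N - 1) * ln G)"
    using G by (simp add: exp_of_nat_mult)
  then show ?thesis
    using exponent by (simp only: exp_add[symmetric] exp_diff[symmetric] exp_le_cancel_iff)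
qed

lemma limsup_scaled_ereal_ln_le:
  assumes "eventually (\<lambda>N. p N \<le> exp (- M * real N)) sequentially"
  shows "limsup (\<lambda>N::nat. ereal (1 / real N) * ereal_ln (p N)) \<le> ereal (- M)"
proof (rule Limsup_bounded)
  show "eventually (\<lambda>N. ereal (1 / real N) * ereal_ln (p N) \<le> ereal (- M)) sequentially"
    using assms eventually_ge_at_top[of 1]
  proof eventually_elim
    case (elim N)
    show ?case
    proof (cases "p N \<le> 0")
      case True
      then show ?thesis using elim by (simp add: ereal_ln_def)
    next
      case False
      then have "ln (p N) \<le> - M * real N"
        using elim ln_le_cancel_iff[of "p N" "exp (- M * real N)"] by simp
      then show ?thesis
        using False elim by (simp add: ereal_ln_def divide_le_eq mult.commute)
    qed
  qed
qed

lemma exponentially_tight_profiles: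
  assumes eps: "\<epsilon> \<ge> 0"
  shows "\<exists>K. compact K \<and> (\<forall>N\<ge>2. measure (gamma N \<epsilon> r) (escape_event N \<epsilon> r K) \<le> exp (- M * real N))"
proof -
  obtain a \<alpha> b \<beta> where r: "r = (a, \<alpha>, b, \<beta>)" by (cases r)
  define G where "G = \<epsilon> + sqrt (4 * pi)"
  define C where "C = (cubic_laplacian_bound r)\<^sup>2"
  define c where "c = 2 * max 0 (M + ln G + C)"
  define L where "L = \<bar>\<alpha>\<bar> + c + 1"
  have "1 \<le> sqrt (4 * pi)" using pi_gt3 by simp
  then have G: "G \<ge> 1" using eps unfolding G_def by linarith
  have c: "c \<ge> 0" and cM: "M + ln G + C \<le> c / 2" by (simp_all add: c_def)
  have "measure (gamma N \<epsilon> r) (escape_event N \<epsilon> r (lipschitz_profiles (\<bar>a\<bar> + L) L))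
    \<le> exp (- M * real N)" (is "?p \<le> _") if N: "N \<ge> 2" for N
  proof -
    have "?p \<le> exp (- (c * real N / 2)) * G ^ (N - 1) / exp (- ((real N + 1) * C / 2))"
      unfolding G_def C_def L_def by (rule gamma_escape_lipschitz_profiles_le[OF N eps r c])
    also have "\<dots> \<le> exp (- M * real N)"
      using N by (intro tail_bound_le_exp G cM) (simp_all add: C_def)
    finally show ?thesis .
  qed
  moreover have "compact (lipschitz_profiles (\<bar>a\<bar> + L) L)"
    by (rule compact_lipschitz_profiles) (simp add: L_def c)
  ultimately show ?thesis by blast
qed

theorem lemma3p7:
  fixes \<epsilon> :: real and r :: "real \<times> real \<times> real \<times> real"
  assumes "\<epsilon> \<ge> 0"
  shows "\<forall>M::real. \<exists>K :: (real \<Rightarrow>\<^sub>C real) set.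
           compact K \<and>
           limsup (\<lambda>N::nat. ereal (1 / real N) *
             ereal_ln (measure (gamma N \<epsilon> r)
               {x \<in> space (gamma N \<epsilon> r).
                  (\<lambda>t. profile N (config N r x) (clamp01 t)) \<notin> apply_bcontfun ` K}))
           \<le> ereal (- M)"
proof (intro allI, fold escape_event_def)
  fix M :: real
  obtain K where K: "compact K"
    and bound: "\<forall>N\<ge>2. measure (gamma N \<epsilon> r) (escape_event N \<epsilon> r K) \<le> exp (- M * real N)"
    using exponentially_tight_profiles[OF assms, where M = M] by blast
  have "limsup (\<lambda>N. ereal (1 / real N) * ereal_ln (measure (gamma N \<epsilon> r) (escape_event N \<epsilon> r K)))
      \<le> ereal (- M)"
    using bound by (intro limsup_scaled_ereal_ln_le eventually_sequentiallyI[of 2]) blast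
  with K show "\<exists>K. compact K \<and> limsup (\<lambda>N. ereal (1 / real N) *
      ereal_ln (measure (gamma N \<epsilon> r) (escape_event N \<epsilon> r K))) \<le> ereal (- M)"
    by blast
qed

end
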